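(* Let $p$ be a prime, let $g:\mathbb{Z}_p\to[0,1]$ be any function, let $a_1,a_2,\dots,a_k\in\mathbb{Z}_p\setminus\{0\}$ be $k$ non-zero elements, and let $E\ge 0$ be an integer. Then at least one of the following two conclusions holds. (1) (Vanishing generalized balanced function.) There exists a function $h:\mathbb{Z}_p\to[-1,1]$ such that $h(n)\ge 0$ for every $n\in\mathrm{support}(g)$, $h(n)\le 0$ for every $n\notin\mathrm{support}(g)$, $\sum_{n\in\mathbb{Z}_p} h(n)=0$, $\|h\|_1=\sum_{n\in\mathbb{Z}_p}|h(n)|\ge E$, and $\hat h(a_1)=\hat h(a_2)=\cdots=\hat h(a_k)=0$. (2) (Generalized balanced function with small spectral support.) There exists a function $h:\mathbb{Z}_p\to\mathbb{R}$ with $$\mathrm{support}(\hat h)\subseteq\{0\}\cup\{a_1,\dots,a_k\}\cup\{-a_1,\dots,-a_k\},$$ such that, for all but at most $(2k+1)E$ elements $n\in\mathbb{Z}_p$, we have $h(n)>0$ if $n\in\mathrm{support}(g)$ and $h(n)<0$ if $n\notin\mathrm{support}(g)$.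
   Context: $\mathbb{Z}_p=\mathbb{Z}/p\mathbb{Z}$. For a function $f:\mathbb{Z}_p\to\mathbb{C}$, its Fourier transform is $\hat f(a)=\sum_{n\in\mathbb{Z}_p} f(n)\,\omega^{an}$ for $a\in\mathbb{Z}_p$, where $\omega=e^{2\pi i/p}$. For a function $f$, $\mathrm{support}(f)=\{x: f(x)\neq 0\}$, and $\mathrm{support}(g)^c=\mathbb{Z}_p\setminus\mathrm{support}(g)$. *)

theory Defs
  imports "HOL-Analysis.Analysis"
begin

text \<open>Z_p is modelled by the residues {0..<p} :: nat set; functions on Z_p are
functions nat \<Rightarrow> real whose values matter only on {0..<p}.\<close>

definition zp :: "nat \<Rightarrow> nat set" where
  "zp p = {0..<p}"

definition fourier :: "nat \<Rightarrow> (nat \<Rightarrow> real) \<Rightarrow> nat \<Rightarrow> complex" where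
  "fourier p f a = (\<Sum>n\<in>zp p. complex_of_real (f n) * cis (2 * pi * real ((a * n) mod p) / real p))"

definition supp_on :: "nat \<Rightarrow> (nat \<Rightarrow> 'b::zero) \<Rightarrow> nat set" where
  "supp_on p f = {x \<in> zp p. f x \<noteq> 0}"

definition neg_mod :: "nat \<Rightarrow> nat \<Rightarrow> nat" where
  "neg_mod p a = (p - a) mod p"

end

theory Submission
  imports Defs
begin

text \<open>
  Put \<open>\<sigma>(n) = 1\<close> on the support of \<open>g\<close> and
  \<open>\<sigma>(n) = -1\<close> off it, and consider the quadratic form
  \<open>Q(h) = (\<Sum>n h(n))\<^sup>2 + \<Sum>\<^sub>i |\<hat>h(a\<^sub>i)|\<^sup>2\<close>.  Minimise \<open>Q(\<sigma>\<cdot>x)\<close> over the compact convex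
  polytope of weights \<open>0 \<le> x \<le> 1\<close> with \<open>\<Sum>x = E\<close> (nonempty when \<open>E \<le> p\<close>; for
  \<open>E > p\<close> the zero function trivially satisfies conclusion (2)).
  If the minimum is \<open>0\<close>, then \<open>h = \<sigma>\<cdot>x\<close> satisfies conclusion (1).
  Otherwise let \<open>f\<close> be the gradient of \<open>Q\<close> at \<open>u = \<sigma>\<cdot>x\<close>; it is a combination of the
  characters \<open>0, \<plusminus>a\<^sub>i\<close>, so its spectrum is as required in (2).  The first-order
  optimality condition says \<open>\<langle>f, \<sigma>\<cdot>y\<rangle> \<ge> Q(u) > 0\<close> for every admissible weight \<open>y\<close>;
  taking \<open>y\<close> the indicator of \<open>E\<close> points where \<open>f\<close> has the wrong sign gives a
  contradiction, so \<open>f\<close> has the wrong sign at fewer than \<open>E\<close> points (stronger than the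
  bound \<open>(2k+1)E\<close> required).
\<close>

section \<open>Additive characters of \<open>\<int>/p\<close>\<close>

definition zeta :: "nat \<Rightarrow> int \<Rightarrow> complex" where
  "zeta p m = cis (2 * pi * of_int m / real p)"

lemma zeta_add: "zeta p (m + m') = zeta p m * zeta p m'"
  unfolding zeta_def cis_mult by (simp add: add_divide_distrib algebra_simps)

lemma zeta_cnj: "cnj (zeta p m) = zeta p (- m)"
  unfolding zeta_def cis_cnj by simp

lemma zeta_multiple:
  assumes "p > 0"
  shows "zeta p (int p * j) = 1"
proof -
  have "2 * pi * of_int (int p * j) / real p = 2 * pi * of_int j" using assms by simp
  then show ?thesis unfolding zeta_def by simp
qed

lemma zeta_cong:
  assumes "p > 0" "m mod int p = m' mod int p"
  shows "zeta p m = zeta p m'"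
proof -
  obtain j where "m = m' + int p * j"
    using assms(2) by (metis mod_eqE)
  then show ?thesis using zeta_add zeta_multiple[OF assms(1)] by simp
qed

lemma zeta_power: "zeta p c ^ n = zeta p (c * int n)"
proof (induction n)
  case 0
  then show ?case by (simp add: zeta_def)
next
  case (Suc n)
  have "c * int (Suc n) = c * int n + c" by (simp add: algebra_simps)
  then show ?case using Suc by (simp add: zeta_add mult.commute)
qed

lemma zeta_eq_1_imp_dvd:
  assumes "p > 0" "zeta p c = 1"
  shows "int p dvd c"
proof -
  have "cos (2 * pi * of_int c / real p) = 1"
    using assms(2) unfolding zeta_def complex_eq_iff by simp
  then obtain n :: int where "2 * pi * of_int c / real p = of_int n * 2 * pi"
    using cos_one_2pi_int by blast
  then have "of_int c = of_int n * real p" using assms(1) by (simp add: field_simps)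
  then have "c = n * int p" by (metis of_int_eq_iff of_int_mult of_int_of_nat_eq)
  then show ?thesis by simp
qed

lemma zeta_sum_vanishes:
  assumes "p > 0" "\<not> int p dvd c"
  shows "(\<Sum>n\<in>zp p. zeta p (c * int n)) = 0"
proof -
  have "zeta p c \<noteq> 1" using zeta_eq_1_imp_dvd assms by blast
  moreover have "zeta p c ^ p = 1"
    unfolding zeta_power using zeta_multiple[OF assms(1), of c] by (simp add: mult.commute)
  ultimately show ?thesis
    using sum_gp_strict[of "zeta p c" p] by (simp add: zeta_power zp_def atLeast0LessThan)
qed

lemma fourier_kernel_zeta:
  assumes "p > 0"
  shows "cis (2 * pi * real ((x * n) mod p) / real p) = zeta p (int x * int n)"
proof -
  have "cis (2 * pi * real ((x * n) mod p) / real p) = zeta p (int ((x * n) mod p))"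
    unfolding zeta_def by simp
  also have "\<dots> = zeta p (int x * int n)"
    by (rule zeta_cong[OF assms]) (simp add: zmod_int)
  finally show ?thesis .
qed

lemma not_dvd_if_small: "0 < \<bar>c\<bar> \<Longrightarrow> \<bar>c\<bar> < int p \<Longrightarrow> \<not> int p dvd c"
  by (auto dest: dvd_imp_le_int)

section \<open>The quadratic form, its polarisation and its gradient\<close>

definition Q :: "nat \<Rightarrow> (nat \<Rightarrow> nat) \<Rightarrow> nat \<Rightarrow> (nat \<Rightarrow> real) \<Rightarrow> real" where
  "Q p a k h = (\<Sum>n\<in>zp p. h n)\<^sup>2 + (\<Sum>i\<in>{1..k}. (cmod (fourier p h (a i)))\<^sup>2)"

definition B :: "nat \<Rightarrow> (nat \<Rightarrow> nat) \<Rightarrow> nat \<Rightarrow> (nat \<Rightarrow> real) \<Rightarrow> (nat \<Rightarrow> real) \<Rightarrow> real" where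
  "B p a k u d = (\<Sum>n\<in>zp p. u n) * (\<Sum>n\<in>zp p. d n)
     + (\<Sum>i\<in>{1..k}. Re (fourier p u (a i) * cnj (fourier p d (a i))))"

text \<open>The gradient of \<open>Q\<close> at \<open>u\<close> (up to the factor 2): \<open>B p a k u d = \<langle>grad, d\<rangle>\<close>.\<close>
definition grad :: "nat \<Rightarrow> (nat \<Rightarrow> nat) \<Rightarrow> nat \<Rightarrow> (nat \<Rightarrow> real) \<Rightarrow> nat \<Rightarrow> real" where
  "grad p a k u n = (\<Sum>m\<in>zp p. u m)
     + (\<Sum>i\<in>{1..k}. Re (fourier p u (a i) * cnj (cis (2 * pi * real ((a i * n) mod p) / real p))))"

lemma Q_nonneg: "0 \<le> Q p a k h"
  unfolding Q_def by (intro add_nonneg_nonneg sum_nonneg) auto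

lemma Q_eq_0_iff:
  "Q p a k h = 0 \<longleftrightarrow> (\<Sum>n\<in>zp p. h n) = 0 \<and> (\<forall>i\<in>{1..k}. fourier p h (a i) = 0)"
  unfolding Q_def
  by (subst add_nonneg_eq_0_iff) (auto simp: sum_nonneg_eq_0_iff sum_nonneg)

lemma Q_eq_B: "Q p a k u = B p a k u u"
  unfolding Q_def B_def cmod_power2 by (simp add: power2_eq_square)

lemma fourier_linear:
  "fourier p (\<lambda>n. u n + t * d n) b = fourier p u b + complex_of_real t * fourier p d b"
  unfolding fourier_def by (simp add: sum.distrib sum_distrib_left algebra_simps)

lemma Q_along_line:
  "Q p a k (\<lambda>n. u n + t * d n) = Q p a k u + 2 * t * B p a k u d + t\<^sup>2 * Q p a k d"
proof -
  have sq: "(X + t * Y)\<^sup>2 = X\<^sup>2 + 2 * t * (X * Y) + t\<^sup>2 * Y\<^sup>2" for X Y :: real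
    by (simp add: power2_sum power_mult_distrib algebra_simps)
  have cm: "(cmod (A + complex_of_real t * C))\<^sup>2 = (cmod A)\<^sup>2 + 2 * t * Re (A * cnj C) + t\<^sup>2 * (cmod C)\<^sup>2"
    for A C
    unfolding cmod_power2 by (simp add: power2_eq_square algebra_simps)
  show ?thesis
    unfolding Q_def B_def fourier_linear cm sq sum.distrib sum_distrib_left[symmetric]
    by (simp add: sum.distrib sum_distrib_left algebra_simps)
qed

lemma B_eq_pairing_grad: "B p a k u d = (\<Sum>n\<in>zp p. d n * grad p a k u n)"
proof -
  let ?c = "\<lambda>i n. cis (2 * pi * real ((a i * n) mod p) / real p)"
  have "(\<Sum>i\<in>{1..k}. Re (fourier p u (a i) * cnj (fourier p d (a i))))
      = (\<Sum>i\<in>{1..k}. \<Sum>n\<in>zp p. d n * Re (fourier p u (a i) * cnj (?c i n)))"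
    unfolding fourier_def[of p d] by (simp add: sum_distrib_left algebra_simps)
  also have "\<dots> = (\<Sum>n\<in>zp p. d n * (\<Sum>i\<in>{1..k}. Re (fourier p u (a i) * cnj (?c i n))))"
    by (subst sum.swap) (simp add: sum_distrib_left)
  finally show ?thesis
    unfolding B_def grad_def
    by (simp add: distrib_left sum.distrib mult.commute flip: sum_distrib_right)
qed

section \<open>The spectrum of the gradient\<close>

lemma grad_as_characters:
  assumes "p > 0"
  shows "complex_of_real (grad p a k u n) = complex_of_real (\<Sum>m\<in>zp p. u m)
     + (\<Sum>i\<in>{1..k}. (fourier p u (a i) * zeta p (- (int (a i) * int n))
                    + cnj (fourier p u (a i)) * zeta p (int (a i) * int n)) / 2)"
proof -
  have Re_as_mean: "complex_of_real (Re z) = (z + cnj z) / 2" for z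
    by (simp add: complex_add_cnj)
  show ?thesis
    unfolding grad_def fourier_kernel_zeta[OF assms] of_real_add of_real_sum Re_as_mean
    by (simp add: zeta_cnj)
qed

lemma fourier_grad:
  assumes "p > 0"
  shows "fourier p (grad p a k u) b
     = complex_of_real (\<Sum>m\<in>zp p. u m) * (\<Sum>n\<in>zp p. zeta p (int b * int n))
       + (\<Sum>i\<in>{1..k}. fourier p u (a i) / 2 * (\<Sum>n\<in>zp p. zeta p ((int b - int (a i)) * int n))
           + cnj (fourier p u (a i)) / 2 * (\<Sum>n\<in>zp p. zeta p ((int b + int (a i)) * int n)))"
proof -
  have "complex_of_real (grad p a k u n) * zeta p (int b * int n)
     = complex_of_real (\<Sum>m\<in>zp p. u m) * zeta p (int b * int n)
       + (\<Sum>i\<in>{1..k}. fourier p u (a i) / 2 * zeta p ((int b - int (a i)) * int n)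
           + cnj (fourier p u (a i)) / 2 * zeta p ((int b + int (a i)) * int n))" for n
  proof -
    have minus: "zeta p (- (int (a i) * int n)) * zeta p (int b * int n)
               = zeta p ((int b - int (a i)) * int n)" for i
      by (simp add: zeta_add[symmetric] algebra_simps)
    have plus: "zeta p (int (a i) * int n) * zeta p (int b * int n)
               = zeta p ((int b + int (a i)) * int n)" for i
      by (simp add: zeta_add[symmetric] algebra_simps)
    have "(U * zeta p (- (int (a i) * int n)) + cnj U * zeta p (int (a i) * int n)) / 2
            * zeta p (int b * int n)
          = U / 2 * zeta p ((int b - int (a i)) * int n)
            + cnj U / 2 * zeta p ((int b + int (a i)) * int n)" for U i
      unfolding minus[symmetric] plus[symmetric] by (simp add: algebra_simps)
    then show ?thesis
      unfolding grad_as_characters[OF assms]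
      by (simp add: sum_distrib_right distrib_right add_divide_distrib)
  qed
  then show ?thesis
    unfolding fourier_def fourier_kernel_zeta[OF assms]
    by (simp add: sum.distrib sum_distrib_left sum.swap[of _ "zp p"])
qed

lemma grad_spectrum:
  assumes p: "p > 0" and a: "\<forall>i\<in>{1..k}. a i \<in> zp p - {0}"
  shows "supp_on p (fourier p (grad p a k u))
           \<subseteq> {0} \<union> a ` {1..k} \<union> (\<lambda>i. neg_mod p (a i)) ` {1..k}"
proof
  fix b assume b: "b \<in> supp_on p (fourier p (grad p a k u))"
  show "b \<in> {0} \<union> a ` {1..k} \<union> (\<lambda>i. neg_mod p (a i)) ` {1..k}"
  proof (rule ccontr)
    assume nb: "\<not> ?thesis"
    have bp: "0 < b" "b < p" using b nb unfolding supp_on_def zp_def by auto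
    have "\<not> int p dvd int b" using bp by (intro not_dvd_if_small) auto
    moreover have "\<not> int p dvd (int b - int (a i))" if "i \<in> {1..k}" for i
      using a nb that bp by (intro not_dvd_if_small) (force simp: zp_def)+
    moreover have "\<not> int p dvd (int b + int (a i))" if i: "i \<in> {1..k}" for i
    proof -
      have ai: "0 < a i" "a i < p" using a i by (auto simp: zp_def)
      then have "neg_mod p (a i) = p - a i" by (simp add: neg_mod_def)
      then have "b \<noteq> p - a i" using nb i by (metis UnI2 image_eqI)
      then have "\<not> int p dvd (int b + int (a i) - int p)"
        using ai bp by (intro not_dvd_if_small) auto
      then show ?thesis by (metis dvd_diff dvd_refl)
    qed
    ultimately have "fourier p (grad p a k u) b = 0"
      unfolding fourier_grad[OF p] by (simp add: zeta_sum_vanishes[OF p])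
    then show False using b unfolding supp_on_def by simp
  qed
qed

section \<open>The weight polytope and the minimiser\<close>

definition weights :: "nat \<Rightarrow> nat \<Rightarrow> (nat \<Rightarrow> real) set" where
  "weights p E = {x. (\<forall>n. (n < p \<longrightarrow> 0 \<le> x n \<and> x n \<le> 1) \<and> (\<not> n < p \<longrightarrow> x n = 0))
                     \<and> (\<Sum>n\<in>zp p. x n) = real E}"

lemma weightsD:
  assumes "x \<in> weights p E"
  shows "0 \<le> x n" "x n \<le> 1" "\<not> n < p \<Longrightarrow> x n = 0" "(\<Sum>n\<in>zp p. x n) = real E"
  using assms unfolding weights_def by (cases "n < p"; auto)+

lemma indicator_in_weights:
  assumes "S \<subseteq> zp p" "card S = E"
  shows "(\<lambda>n. if n \<in> S then 1 else 0) \<in> weights p E"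
proof -
  have "(\<Sum>n\<in>zp p. if n \<in> S then 1 else 0 :: real) = real (card S)"
    using assms(1) by (simp add: sum.If_cases zp_def Int_absorb1)
  then show ?thesis using assms unfolding weights_def zp_def by auto
qed

lemma weights_nonempty: "E \<le> p \<Longrightarrow> weights p E \<noteq> {}"
  using indicator_in_weights[of "{0..<E}" p E] by (auto simp: zp_def)

lemma weights_segment:
  assumes x: "x \<in> weights p E" and y: "y \<in> weights p E" and t: "0 \<le> t" "t \<le> 1"
  shows "(\<lambda>n. (1 - t) * x n + t * y n) \<in> weights p E"
proof -
  have "0 \<le> (1 - t) * x n + t * y n \<and> (1 - t) * x n + t * y n \<le> 1" for n
    using weightsD(1,2)[OF x, of n] weightsD(1,2)[OF y, of n] t
    by (smt (verit) mult_left_le mult_nonneg_nonneg)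
  moreover have "(\<Sum>n\<in>zp p. (1 - t) * x n + t * y n)
                   = (1 - t) * (\<Sum>n\<in>zp p. x n) + t * (\<Sum>n\<in>zp p. y n)"
    by (simp add: sum.distrib sum_distrib_left)
  then have "(\<Sum>n\<in>zp p. (1 - t) * x n + t * y n) = real E"
    using weightsD(4)[OF x] weightsD(4)[OF y] by (simp add: algebra_simps)
  ultimately show ?thesis
    using weightsD(3)[OF x] weightsD(3)[OF y] unfolding weights_def by auto
qed

lemma continuous_on_coordinate [continuous_intros]:
  "continuous_on S (\<lambda>x::nat\<Rightarrow>real. x n)"
  by (rule continuous_on_subset[OF continuous_on_product_coordinates]) simp

lemma weights_compact: "compact (weights p E)"
proof -
  define box where "box n = (if n < p then {0..1} else {0::real})" for n
  have "compactin (product_topology (\<lambda>_. euclidean) UNIV) (PiE UNIV box)"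
    unfolding compactin_PiE by (simp add: box_def)
  then have "compact (PiE UNIV box)" by (simp add: euclidean_product_topology)
  moreover have "closed {x::nat\<Rightarrow>real. (\<Sum>n\<in>zp p. x n) = real E}"
    by (intro closed_Collect_eq continuous_intros)
  moreover have "weights p E = PiE UNIV box \<inter> {x. (\<Sum>n\<in>zp p. x n) = real E}"
    unfolding weights_def box_def by (auto simp: PiE_UNIV_domain Pi_def)
  ultimately show ?thesis by (simp add: compact_Int_closed)
qed

lemma Q_signed_continuous:
  "continuous_on S (\<lambda>x::nat\<Rightarrow>real. Q p a k (\<lambda>n. s n * x n))"
  unfolding Q_def fourier_def by (intro continuous_intros)

lemma exists_minimiser:
  assumes "E \<le> p"
  obtains x where "x \<in> weights p E"
    "\<And>y. y \<in> weights p E \<Longrightarrow> Q p a k (\<lambda>n. s n * x n) \<le> Q p a k (\<lambda>n. s n * y n)"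
  using continuous_attains_inf[OF weights_compact weights_nonempty[OF assms] Q_signed_continuous]
  by blast

section \<open>First-order optimality\<close>

lemma linear_term_nonneg:
  fixes b q :: real
  assumes h: "\<And>t. 0 < t \<Longrightarrow> t \<le> 1 \<Longrightarrow> 0 \<le> 2 * t * b + t\<^sup>2 * q" and q: "0 \<le> q"
  shows "0 \<le> b"
proof (rule ccontr)
  assume "\<not> 0 \<le> b"
  then have b: "b < 0" by simp
  text \<open>Choose \<open>t \<in> (0,1]\<close> with \<open>t q \<le> -b\<close>; then \<open>2 t b + t\<^sup>2 q \<le> t b < 0\<close>.\<close>
  obtain t where t: "0 < t" "t \<le> 1" "t * q \<le> - b"
  proof (cases "q \<le> - b")
    case True
    then show ?thesis using that[of 1] by simp
  next
    case False
    then show ?thesis using that[of "- b / q"] b by (auto simp: field_simps)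
  qed
  have "2 * t * b + t\<^sup>2 * q = t * (2 * b + t * q)" by (simp add: power2_eq_square algebra_simps)
  also have "\<dots> < 0" using t b by (intro mult_pos_neg) auto
  finally show False using h[OF t(1,2)] by simp
qed

lemma first_order_condition:
  assumes x: "x \<in> weights p E" and y: "y \<in> weights p E"
    and min: "\<And>z. z \<in> weights p E \<Longrightarrow> Q p a k (\<lambda>n. s n * x n) \<le> Q p a k (\<lambda>n. s n * z n)"
  shows "Q p a k (\<lambda>n. s n * x n) \<le> B p a k (\<lambda>n. s n * x n) (\<lambda>n. s n * y n)"
proof -
  define u where "u n = s n * x n" for n
  define d where "d n = s n * y n - u n" for n
  have "0 \<le> 2 * t * B p a k u d + t\<^sup>2 * Q p a k d" if t: "0 < t" "t \<le> 1" for t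
  proof -
    have "(\<lambda>n. (1 - t) * x n + t * y n) \<in> weights p E"
      using weights_segment[OF x y] t by simp
    then have "Q p a k u \<le> Q p a k (\<lambda>n. s n * ((1 - t) * x n + t * y n))"
      using min unfolding u_def by blast
    also have "(\<lambda>n. s n * ((1 - t) * x n + t * y n)) = (\<lambda>n. u n + t * d n)"
      unfolding u_def d_def by (simp add: algebra_simps)
    finally show ?thesis unfolding Q_along_line by simp
  qed
  then have "0 \<le> B p a k u d" using linear_term_nonneg Q_nonneg by blast
  also have "B p a k u d = B p a k u (\<lambda>n. s n * y n) - B p a k u u"
    unfolding B_eq_pairing_grad d_def by (simp add: left_diff_distrib sum_subtractf)
  finally show ?thesis unfolding Q_eq_B u_def by simp
qed

definition sign_of_supp :: "nat \<Rightarrow> (nat \<Rightarrow> real) \<Rightarrow> nat \<Rightarrow> real" where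
  "sign_of_supp p g n = (if n \<in> supp_on p g then 1 else -1)"

definition sign_errors :: "nat \<Rightarrow> (nat \<Rightarrow> real) \<Rightarrow> (nat \<Rightarrow> real) \<Rightarrow> nat set" where
  "sign_errors p g h =
     {n \<in> zp p. \<not> ((n \<in> supp_on p g \<longrightarrow> h n > 0) \<and> (n \<notin> supp_on p g \<longrightarrow> h n < 0))}"

lemma vanishing_balanced_function:
  fixes h :: "nat \<Rightarrow> real"
  assumes x: "x \<in> weights p E" and h: "h = (\<lambda>n. sign_of_supp p g n * x n)"
    and Q0: "Q p a k h = 0"
  shows "(\<forall>n\<in>zp p. -1 \<le> h n \<and> h n \<le> 1)
       \<and> (\<forall>n\<in>supp_on p g. h n \<ge> 0)
       \<and> (\<forall>n\<in>zp p - supp_on p g. h n \<le> 0)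
       \<and> (\<Sum>n\<in>zp p. h n) = 0
       \<and> (\<Sum>n\<in>zp p. \<bar>h n\<bar>) \<ge> real E
       \<and> (\<forall>i\<in>{1..k}. fourier p h (a i) = 0)"
proof -
  have abs_h: "\<bar>h n\<bar> = x n" for n
    using weightsD(1)[OF x] by (simp add: h sign_of_supp_def)
  have "(\<Sum>n\<in>zp p. \<bar>h n\<bar>) = real E" using weightsD(4)[OF x] by (simp add: abs_h)
  moreover have "-1 \<le> h n \<and> h n \<le> 1" for n
    using abs_h[of n] weightsD(2)[OF x, of n] by linarith
  moreover have "h n \<ge> 0" if "n \<in> supp_on p g" for n
    using that weightsD(1)[OF x] by (simp add: h sign_of_supp_def)
  moreover have "h n \<le> 0" if "n \<notin> supp_on p g" for n
    using that weightsD(1)[OF x] by (simp add: h sign_of_supp_def)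
  ultimately show ?thesis using Q0 unfolding Q_eq_0_iff by auto
qed

text \<open>Otherwise
  the indicator \<open>y\<close> of \<open>E\<close> sign errors would give \<open>0 < Q(u) \<le> \<langle>grad, \<sigma>\<cdot>y\<rangle> \<le> 0\<close>.\<close>
lemma few_sign_errors:
  assumes x: "x \<in> weights p E"
    and min: "\<And>y. y \<in> weights p E \<Longrightarrow>
               Q p a k (\<lambda>n. sign_of_supp p g n * x n) \<le> Q p a k (\<lambda>n. sign_of_supp p g n * y n)"
    and pos: "Q p a k (\<lambda>n. sign_of_supp p g n * x n) > 0"
  shows "card (sign_errors p g (grad p a k (\<lambda>n. sign_of_supp p g n * x n))) < E"
proof (rule ccontr)
  let ?\<sigma> = "sign_of_supp p g" and ?u = "\<lambda>n. sign_of_supp p g n * x n"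
  let ?N = "sign_errors p g (grad p a k ?u)"
  assume "\<not> card ?N < E"
  then obtain S where S: "S \<subseteq> ?N" "card S = E"
    using obtain_subset_with_card_n by (metis not_less)
  have Szp: "S \<subseteq> zp p" using S(1) unfolding sign_errors_def by auto
  define y where "y n = (if n \<in> S then 1 else 0 :: real)" for n
  have "Q p a k ?u \<le> B p a k ?u (\<lambda>n. ?\<sigma> n * y n)"
    using first_order_condition[OF x _ min] indicator_in_weights[OF Szp S(2)]
    unfolding y_def by blast
  also have "\<dots> = (\<Sum>n\<in>S. ?\<sigma> n * grad p a k ?u n)"
    unfolding B_eq_pairing_grad y_def using Szp
    by (intro sum.mono_neutral_cong_right) (auto simp: zp_def)
  also have "\<dots> \<le> 0"
    using S(1) by (intro sum_nonpos) (auto simp: sign_errors_def sign_of_supp_def)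
  finally show False using pos by simp
qed

theorem theorem1:
  fixes p :: nat and g :: "nat \<Rightarrow> real" and a :: "nat \<Rightarrow> nat" and k :: nat and E :: nat
  assumes "prime p"
    and "\<forall>n\<in>zp p. 0 \<le> g n \<and> g n \<le> 1"
    and "\<forall>i\<in>{1..k}. a i \<in> zp p - {0}"
  shows "(\<exists>h :: nat \<Rightarrow> real.
            (\<forall>n\<in>zp p. -1 \<le> h n \<and> h n \<le> 1)
          \<and> (\<forall>n\<in>supp_on p g. h n \<ge> 0)
          \<and> (\<forall>n\<in>zp p - supp_on p g. h n \<le> 0)
          \<and> (\<Sum>n\<in>zp p. h n) = 0
          \<and> (\<Sum>n\<in>zp p. \<bar>h n\<bar>) \<ge> real E
          \<and> (\<forall>i\<in>{1..k}. fourier p h (a i) = 0))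
       \<or> (\<exists>h :: nat \<Rightarrow> real.
            supp_on p (fourier p h) \<subseteq> {0} \<union> a ` {1..k} \<union> (\<lambda>i. neg_mod p (a i)) ` {1..k}
          \<and> card {n \<in> zp p. \<not> ((n \<in> supp_on p g \<longrightarrow> h n > 0) \<and> (n \<notin> supp_on p g \<longrightarrow> h n < 0))}
              \<le> (2 * k + 1) * E)"
proof (cases "E \<le> p")
  case False
  text \<open>Too large an \<open>E\<close>: the zero function has at most \<open>p < E\<close> sign errors.\<close>
  have "card (sign_errors p g (\<lambda>_. 0)) \<le> card (zp p)"
    by (rule card_mono) (auto simp: sign_errors_def zp_def)
  then have "card (sign_errors p g (\<lambda>_. 0)) \<le> (2 * k + 1) * E"
    using False by (simp add: zp_def)
  then show ?thesis
    by (intro disjI2 exI[of _ "\<lambda>_. 0"]) (simp add: sign_errors_def supp_on_def fourier_def)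
next
  case True
  have p: "p > 0" using assms(1) prime_gt_0_nat by blast
  let ?\<sigma> = "sign_of_supp p g"
  obtain x where x: "x \<in> weights p E"
    and min: "\<And>y. y \<in> weights p E \<Longrightarrow> Q p a k (\<lambda>n. ?\<sigma> n * x n) \<le> Q p a k (\<lambda>n. ?\<sigma> n * y n)"
    using exists_minimiser[OF True] by metis
  show ?thesis
  proof (cases "Q p a k (\<lambda>n. ?\<sigma> n * x n) = 0")
    case True
    then show ?thesis by (intro disjI1 exI) (rule vanishing_balanced_function[OF x refl])
  next
    case False
    then have "Q p a k (\<lambda>n. ?\<sigma> n * x n) > 0" using Q_nonneg by (simp add: order_less_le)
    then have "card (sign_errors p g (grad p a k (\<lambda>n. ?\<sigma> n * x n))) \<le> (2 * k + 1) * E"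
      using few_sign_errors[OF x min] by fastforce
    then show ?thesis
      using grad_spectrum[OF p assms(3)] unfolding sign_errors_def by blast
  qed
qed

end
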